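(* Let $r\in(0,1)$, $\alpha\in(0,1)$ and let $\{m_n\}_{n\ge1}$ be an infinitely increasing sequence of natural numbers. For each $n$ let $Y_n$ be a random variable with $$Y_n\stackrel{d}{=}\frac{S_{\alpha,1}Z_{r,\mu_n}^{1/\alpha}}{1+S_{\alpha,1}Z_{r,\mu_n}^{1/\alpha}},\qquad \mu_n=m_n^{-\alpha},$$ ($S_{\alpha,1}$, $Z_{r,\mu_n}$ independent) and let $K_n$ have the $Y_n$-mixed binomial distribution with parameter $m_n$. Then, as $n\to\infty$, $\mathsf P(K_n<x)\Longrightarrow \Pi^{(S_{\alpha,1}Z_{r,1}^{1/\alpha})}(x)$, i.e. $K_n$ converges in distribution to the mixed Poisson law with structural random variable $S_{\alpha,1}Z_{r,1}^{1/\alpha}$ ($S_{\alpha,1}$, $Z_{r,1}$ independent).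
   Context: $G_{s,1}$ is a gamma random variable with density $\frac1{\Gamma(s)}x^{s-1}e^{-x}$, $x\ge0$. For $0<\alpha<1$, $S_{\alpha,1}$ has the one-sided strictly stable characteristic function $\exp\{-|t|^{\alpha}\exp(-\tfrac12 i\pi\alpha\,\mathrm{sign}\,t)\}$. For $r\in(0,1)$, $\mu>0$: $Z_{r,\mu}=\mu(G_{r,1}+G_{1-r,1})/G_{r,1}$ with independent gamma factors. For a random variable $Y$ with $\mathsf P(0<Y<1)=1$ and $m\in\mathbb N$, $K$ has the $Y$-mixed binomial distribution with parameter $m$ if $\mathsf P(K=j)=\binom{m}{j}\int_0^1z^j(1-z)^{m-j}\,d\mathsf P(Y<z)$, $j=0,\dots,m$. For a positive random variable $Z$, the mixed Poisson law with structural variable $Z$ has $\mathsf P(\,\cdot=k)=\frac1{k!}\int_0^\infty e^{-z}z^k\,d\mathsf P(Z<z)$, $k=0,1,\dots$, with distribution function denoted $\Pi^{(Z)}$. *)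

theory Defs
  imports "HOL-Probability.Probability"
begin

definition gamma_density :: "real \<Rightarrow> real \<Rightarrow> real" where
  "gamma_density s x = (if 0 \<le> x then x powr (s - 1) * exp (- x) / Gamma s else 0)"

definition gamma_measure :: "real \<Rightarrow> real measure" where
  "gamma_measure s = density lborel (\<lambda>x. ennreal (gamma_density s x))"

text \<open>One-sided strictly stable characteristic function.\<close>
definition stable_char :: "real \<Rightarrow> real \<Rightarrow> complex" where
  "stable_char \<alpha> t =
     exp (- (complex_of_real (\<bar>t\<bar> powr \<alpha>)) * exp (- (\<i> * complex_of_real (pi * \<alpha> / 2 * sgn t))))"

definition Z_measure :: "real \<Rightarrow> real \<Rightarrow> real measure" where
  "Z_measure r \<mu> = distr (gamma_measure r \<Otimes>\<^sub>M gamma_measure (1 - r)) borel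
      (\<lambda>(g1, g2). \<mu> * (g1 + g2) / g1)"

definition SZ_measure :: "real measure \<Rightarrow> real \<Rightarrow> real \<Rightarrow> real \<Rightarrow> real measure" where
  "SZ_measure S \<alpha> r \<mu> = distr (S \<Otimes>\<^sub>M Z_measure r \<mu>) borel
      (\<lambda>(s, z). s * z powr (1 / \<alpha>))"

definition mixed_binomial :: "nat \<Rightarrow> real measure \<Rightarrow> real measure" where
  "mixed_binomial m Y = distr
     (density (count_space UNIV)
        (\<lambda>j::nat. if j \<le> m then ennreal (real (m choose j) *
             (LINT z|Y. z ^ j * (1 - z) ^ (m - j))) else 0))
     borel real"

definition mixed_poisson :: "real measure \<Rightarrow> real measure" where
  "mixed_poisson Z = distr
     (density (count_space UNIV)
        (\<lambda>k::nat. ennreal ((LINT z|Z. exp (- z) * z ^ k) / fact k)))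
     borel real"

end

theory Submission
  imports Defs "HOL-Complex_Analysis.Complex_Analysis" "HOL-Real_Asymp.Real_Asymp"
begin

text \<open>
  Let \<open>W = S Z\<close> with \<open>Z\<close> the variable \<open>Z_measure r 1\<close> raised to \<open>1/\<alpha>\<close>. Since
  \<open>\<mu>_n powr (1/\<alpha>) = 1/m_n\<close>, the variable \<open>Y_n\<close> is \<open>(W/m_n)/(1 + W/m_n)\<close>, and for every
  \<open>w \<ge> 0\<close> the binomial probabilities with \<open>m\<close> trials and success probability
  \<open>(w/m)/(1 + w/m)\<close> tend to the Poisson probabilities with mean \<open>w\<close>. Binomial probabilities
  are bounded by 1, so dominated convergence gives convergence of the mixed probabilities,
  which for laws on the natural numbers is weak convergence.

  This needs \<open>W \<ge> 0\<close>, i.e. that the one-sided stable law lives on \<open>[0, \<infinity>)\<close>. Its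
  characteristic function extends to \<open>exp (- (-\<i> z) powr \<alpha>)\<close>, analytic and bounded by 1 in the
  upper half-plane. For \<open>a < b < 0\<close> the integrand of the Levy inversion formula then extends
  too and is bounded by \<open>2 e^(b Im z) / |z|\<close>; moving the integral over \<open>[-T, T]\<close> to the other
  three sides of the rectangle of height \<open>\<surd>T\<close> shows that it tends to 0, so the law puts no
  mass on \<open>(a, b]\<close>.
\<close>

section \<open>Gamma laws and the structural variable\<close>

lemma sets_gamma_measure [measurable_cong, simp]: "sets (gamma_measure s) = sets borel"
  by (simp add: gamma_measure_def)

lemma space_gamma_measure [simp]: "space (gamma_measure s) = UNIV"
  by (simp add: gamma_measure_def)

lemma borel_measurable_gamma_density [measurable]: "gamma_density s \<in> borel_measurable borel"
  unfolding gamma_density_def by measurable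

lemma prob_space_gamma_measure:
  assumes "0 < s"
  shows "prob_space (gamma_measure s)"
proof
  have G: "Gamma s > 0" using assms by (rule Gamma_real_pos)
  have "emeasure (gamma_measure s) (space (gamma_measure s)) =
        (\<integral>\<^sup>+ t. ennreal (indicator {0..} t * t powr (s - 1) / exp t) * ennreal (1 / Gamma s) \<partial>lborel)"
    unfolding gamma_measure_def
    by (subst emeasure_density)
       (auto intro!: nn_integral_cong simp: gamma_density_def exp_minus field_simps indicator_def
         ennreal_mult[symmetric] less_imp_le[OF G])
  also have "\<dots> = ennreal (Gamma s) * ennreal (1 / Gamma s)"
    by (subst nn_integral_multc) (simp_all add: Gamma_conv_nn_integral_real[OF assms])
  also have "\<dots> = 1" using G by (simp add: ennreal_mult'[symmetric])
  finally show "emeasure (gamma_measure s) (space (gamma_measure s)) = 1" .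
qed

lemma AE_gamma_measure_nonneg: "AE x in gamma_measure s. 0 \<le> x"
  unfolding gamma_measure_def by (subst AE_density) (auto simp: gamma_density_def)

lemma pair_prob_space_gamma_measure:
  assumes "0 < r" "r < 1"
  shows "pair_prob_space (gamma_measure r) (gamma_measure (1 - r))"
proof -
  have "prob_space (gamma_measure r)" "prob_space (gamma_measure (1 - r))"
    using assms by (auto intro!: prob_space_gamma_measure)
  then show ?thesis
    by (auto simp: pair_prob_space_def pair_sigma_finite_def prob_space_imp_sigma_finite)
qed

lemma sets_Z_measure [measurable_cong, simp]: "sets (Z_measure r \<mu>) = sets borel"
  by (simp add: Z_measure_def)

lemma space_Z_measure [simp]: "space (Z_measure r \<mu>) = UNIV"
  by (simp add: Z_measure_def)

lemma prob_space_Z_measure: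
  assumes "0 < r" "r < 1"
  shows "prob_space (Z_measure r \<mu>)"
proof -
  interpret pair_prob_space "gamma_measure r" "gamma_measure (1 - r)"
    using pair_prob_space_gamma_measure[OF assms] .
  show ?thesis unfolding Z_measure_def by (rule prob_space_distr) measurable
qed

lemma Z_measure_scale: "Z_measure r \<mu> = distr (Z_measure r 1) borel (\<lambda>z. \<mu> * z)"
  unfolding Z_measure_def by (subst distr_distr) (auto intro!: distr_cong)

lemma AE_Z_measure_nonneg:
  assumes "0 < r" "r < 1" "0 \<le> \<mu>"
  shows "AE z in Z_measure r \<mu>. 0 \<le> z"
proof -
  interpret P: pair_prob_space "gamma_measure r" "gamma_measure (1 - r)"
    using pair_prob_space_gamma_measure[OF assms(1,2)] .
  have "AE x in gamma_measure r \<Otimes>\<^sub>M gamma_measure (1 - r). 0 \<le> fst x \<and> 0 \<le> snd x"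
    by (rule P.AE_pair_measure, measurable) (auto intro!: eventually_mono[OF AE_gamma_measure_nonneg])
  then have "AE x in gamma_measure r \<Otimes>\<^sub>M gamma_measure (1 - r). 0 \<le> \<mu> * (fst x + snd x) / fst x"
    by (rule eventually_mono) (use assms(3) in auto)
  then show ?thesis
    unfolding Z_measure_def by (subst AE_distr_iff) (auto simp: split_beta)
qed

lemma SZ_measure_eq_distr:
  assumes S: "real_distribution S" and r: "0 < r" "r < 1" and \<mu>: "0 \<le> \<mu>"
  shows "SZ_measure S \<alpha> r \<mu> =
    distr (S \<Otimes>\<^sub>M Z_measure r 1) borel (\<lambda>(s, z). \<mu> powr (1 / \<alpha>) * (s * z powr (1 / \<alpha>)))"
proof -
  interpret S: real_distribution S by fact
  interpret Z: prob_space "Z_measure r 1" using prob_space_Z_measure[OF r] .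
  interpret P: pair_prob_space S "Z_measure r 1" ..
  have "S \<Otimes>\<^sub>M Z_measure r \<mu> = distr S borel (\<lambda>s. s) \<Otimes>\<^sub>M distr (Z_measure r 1) borel (\<lambda>z. \<mu> * z)"
    by (simp add: distr_id2 Z_measure_scale[symmetric])
  also have "\<dots> = distr (S \<Otimes>\<^sub>M Z_measure r 1) (borel \<Otimes>\<^sub>M borel) (\<lambda>(s, z). (s, \<mu> * z))"
    by (rule pair_measure_distr)
       (auto simp: Z_measure_scale[symmetric] intro: prob_space_imp_sigma_finite prob_space_Z_measure r)
  finally have pair: "S \<Otimes>\<^sub>M Z_measure r \<mu> =
      distr (S \<Otimes>\<^sub>M Z_measure r 1) (borel \<Otimes>\<^sub>M borel) (\<lambda>(s, z). (s, \<mu> * z))" .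
  have "SZ_measure S \<alpha> r \<mu> =
      distr (S \<Otimes>\<^sub>M Z_measure r 1) borel (\<lambda>(s, z). s * (\<mu> * z) powr (1 / \<alpha>))"
    unfolding SZ_measure_def pair by (subst distr_distr) (auto intro!: distr_cong simp: split_beta)
  also have "\<dots> = distr (S \<Otimes>\<^sub>M Z_measure r 1) borel (\<lambda>(s, z). \<mu> powr (1 / \<alpha>) * (s * z powr (1 / \<alpha>)))"
  proof (rule distr_cong_AE)
    have "AE x in S \<Otimes>\<^sub>M Z_measure r 1. 0 \<le> snd x"
      by (rule P.AE_pair_measure, measurable) (auto intro: AE_Z_measure_nonneg[OF r])
    then show "AE x in S \<Otimes>\<^sub>M Z_measure r 1.
        (case x of (s, z) \<Rightarrow> s * (\<mu> * z) powr (1 / \<alpha>)) = (case x of (s, z) \<Rightarrow> \<mu> powr (1 / \<alpha>) * (s * z powr (1 / \<alpha>)))"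
      by (rule eventually_mono) (auto simp: powr_mult \<mu>)
  qed auto
  finally show ?thesis .
qed

lemma SZ_measure_power_eq_distr:
  assumes S: "real_distribution S" and r: "0 < r" "r < 1" and \<alpha>: "0 < \<alpha>"
  shows "SZ_measure S \<alpha> r (real k powr - \<alpha>) =
    distr (S \<Otimes>\<^sub>M Z_measure r 1) borel (\<lambda>(s, z). s * z powr (1 / \<alpha>) / real k)"
proof -
  have "(real k powr - \<alpha>) powr (1 / \<alpha>) = 1 / real k"
    using \<alpha> by (cases "k = 0") (simp_all add: powr_powr powr_neg_one)
  then show ?thesis
    using SZ_measure_eq_distr[OF S r powr_ge_zero] by simp
qed

lemma AE_SZ_nonneg:
  assumes S: "real_distribution S" and S_nonneg: "AE s in S. 0 \<le> s" and r: "0 < r" "r < 1"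
  shows "AE x in S \<Otimes>\<^sub>M Z_measure r 1. 0 \<le> (case x of (s, z) \<Rightarrow> s * z powr (1 / \<alpha>))"
proof -
  interpret S: real_distribution S by fact
  interpret Z: prob_space "Z_measure r 1" using prob_space_Z_measure[OF r] .
  interpret P: pair_prob_space S "Z_measure r 1" ..
  have Z_nonneg: "AE z in Z_measure r 1. 0 \<le> z"
    using AE_Z_measure_nonneg[OF r] by simp
  have "AE x in S \<Otimes>\<^sub>M Z_measure r 1. 0 \<le> fst x \<and> 0 \<le> snd x"
    by (rule P.AE_pair_measure, measurable) (use S_nonneg Z_nonneg in \<open>auto elim!: eventually_mono\<close>)
  then show ?thesis by (rule eventually_mono) auto
qed

section \<open>Binomial probabilities and the Poisson limit\<close>

lemma binomial_over_power_tendsto: "(\<lambda>m. real (m choose j) / real m ^ j) \<longlonglongrightarrow> 1 / fact j"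
proof -
  have eq: "real (m choose j) / real m ^ j = (\<Prod>i = 0..<j. (real m - real i) / real m) / fact j" for m
  proof -
    have "real (m choose j) = (\<Prod>i = 0..<j. real m - real i) / fact j"
      using gbinomial_mult_fact[of j "real m"] by (simp add: binomial_gbinomial field_simps)
    then show ?thesis by (simp add: prod_dividef)
  qed
  have "(\<lambda>m. (\<Prod>i = 0..<j. (real m - real i) / real m) / fact j) \<longlonglongrightarrow> (\<Prod>i = 0..<j. 1) / fact j"
  proof (intro tendsto_divide tendsto_prod tendsto_const)
    fix i :: nat
    show "(\<lambda>m. (real m - real i) / real m) \<longlonglongrightarrow> 1" by real_asymp
  qed simp
  then show ?thesis by (simp add: eq)
qed

lemma binomial_tendsto_poisson:
  fixes w :: real
  assumes "0 \<le> w"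
  defines "p \<equiv> \<lambda>m. (w / real m) / (1 + w / real m)"
  shows "(\<lambda>m. real (m choose j) * p m ^ j * (1 - p m) ^ (m - j)) \<longlonglongrightarrow> exp (- w) * w ^ j / fact j"
proof -
  have "eventually (\<lambda>m. real (m choose j) / real m ^ j * w ^ j / (1 + w / real m) ^ m =
      real (m choose j) * p m ^ j * (1 - p m) ^ (m - j)) sequentially"
    using eventually_ge_at_top[of "Suc j"]
  proof eventually_elim
    case (elim m)
    define q where "q = 1 + w / real m"
    have q: "q > 0" using assms elim by (simp add: q_def add_pos_nonneg)
    have p: "p m = (w / real m) / q" by (simp add: p_def q_def)
    have one: "1 - p m = 1 / q" using elim q by (simp add: p_def q_def field_simps)
    have split: "q ^ m = q ^ j * q ^ (m - j)" using elim by (simp add: power_add[symmetric])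
    show ?case unfolding one unfolding split p q_def[symmetric] using q by (simp add: power_divide field_simps)
  qed
  moreover have "(\<lambda>m. real (m choose j) / real m ^ j * w ^ j / (1 + w / real m) ^ m)
      \<longlonglongrightarrow> 1 / fact j * w ^ j / exp w"
    by (intro tendsto_intros binomial_over_power_tendsto tendsto_exp_limit_sequentially) simp
  ultimately show ?thesis
    by (auto simp: exp_minus field_simps elim: Lim_transform_eventually)
qed

definition nat_law :: "(nat \<Rightarrow> real) \<Rightarrow> real measure" where
  "nat_law p = distr (density (count_space UNIV) (\<lambda>j. ennreal (p j))) borel real"

lemma cdf_nat_law: "cdf (nat_law p) x = (\<Sum>j | real j \<le> x. max (p j) 0)"
proof -
  have fin: "finite {j::nat. real j \<le> x}"
    by (rule finite_subset[of _ "{..nat \<lceil>x\<rceil>}"])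
       (auto, metis ceiling_mono ceiling_of_nat nat_int nat_mono)
  have "cdf (nat_law p) x = measure (density (count_space UNIV) (\<lambda>j. ennreal (p j))) {j. real j \<le> x}"
    unfolding cdf_def nat_law_def by (subst measure_distr) (auto simp: vimage_def)
  also have "\<dots> = enn2real (\<Sum>j | real j \<le> x. ennreal (p j))"
    unfolding measure_def
    by (subst emeasure_density)
       (auto simp: nn_integral_count_space_indicator[symmetric] nn_integral_count_space_finite[OF fin])
  also have "(\<Sum>j | real j \<le> x. ennreal (p j)) = (\<Sum>j | real j \<le> x. ennreal (max (p j) 0))"
    by (intro sum.cong refl) (auto simp: max_def ennreal_neg)
  also have "\<dots> = ennreal (\<Sum>j | real j \<le> x. max (p j) 0)"
    by (rule sum_ennreal) auto
  finally show ?thesis by (simp add: sum_nonneg)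
qed

lemma weak_conv_nat_law:
  assumes "\<And>j. (\<lambda>n. p n j) \<longlonglongrightarrow> q j"
  shows "weak_conv_m (\<lambda>n. nat_law (p n)) (nat_law q)"
  unfolding weak_conv_m_def weak_conv_def cdf_nat_law
  by (intro allI impI tendsto_sum tendsto_max assms tendsto_const)

lemma mixed_binomial_eq_nat_law:
  "mixed_binomial m Y = nat_law (\<lambda>j. real (m choose j) * (LINT z|Y. z ^ j * (1 - z) ^ (m - j)))"
  unfolding mixed_binomial_def nat_law_def
  by (intro arg_cong[where f="\<lambda>f. distr (density (count_space UNIV) f) borel real"] ext)
     (auto simp: binomial_eq_0)

lemma mixed_poisson_eq_nat_law:
  "mixed_poisson Z = nat_law (\<lambda>k. (LINT z|Z. exp (- z) * z ^ k) / fact k)"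
  unfolding mixed_poisson_def nat_law_def ..

theorem weak_conv_mixed_binomial_mixed_poisson:
  assumes M: "prob_space M" and W [measurable]: "W \<in> borel_measurable M"
    and W_nonneg: "AE x in M. 0 \<le> W x" and m: "filterlim m at_top sequentially"
  defines "q \<equiv> \<lambda>n x. (W x / real (m n)) / (1 + W x / real (m n))"
  shows "weak_conv_m (\<lambda>n. mixed_binomial (m n) (distr M borel (q n))) (mixed_poisson (distr M borel W))"
proof -
  interpret M: prob_space M by fact
  have q [measurable]: "q n \<in> borel_measurable M" for n unfolding q_def by measurable
  define s where "s j n x = real (m n choose j) * q n x ^ j * (1 - q n x) ^ (m n - j)" for j n x
  have lim: "(\<lambda>n. integral\<^sup>L M (s j n)) \<longlonglongrightarrow> (LINT x|M. exp (- W x) * W x ^ j / fact j)" for j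
  proof (rule integral_dominated_convergence[where w="\<lambda>_. 1"])
    show "s j n \<in> borel_measurable M" for n unfolding s_def by measurable
    show "AE x in M. norm (s j n x) \<le> 1" for n
      using W_nonneg
    proof eventually_elim
      case (elim x)
      have frac: "0 \<le> v / (1 + v)" "v / (1 + v) \<le> 1" if "0 \<le> v" for v :: real
        using that by (simp_all add: divide_le_eq_1)
      have "0 \<le> W x / real (m n)" using elim by simp
      from frac[OF this] have "0 \<le> q n x" "q n x \<le> 1" by (simp_all only: q_def)
      then have "s j n x = pmf (binomial_pmf (m n) (q n x)) j" by (simp add: s_def)
      then show ?case by (simp add: pmf_le_1)
    qed
    show "AE x in M. (\<lambda>n. s j n x) \<longlonglongrightarrow> exp (- W x) * W x ^ j / fact j"
      using W_nonneg
    proof eventually_elim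
      case (elim x)
      show ?case
        unfolding s_def q_def using filterlim_compose[OF binomial_tendsto_poisson[OF elim] m] .
    qed
  qed auto
  have "real (m n choose j) * (LINT z|distr M borel (q n). z ^ j * (1 - z) ^ (m n - j)) = integral\<^sup>L M (s j n)"
    for n j by (simp add: integral_distr s_def[abs_def] mult.assoc)
  moreover have "(LINT z|distr M borel W. exp (- z) * z ^ j) / fact j = (LINT x|M. exp (- W x) * W x ^ j / fact j)"
    for j by (simp add: integral_distr)
  ultimately show ?thesis
    unfolding mixed_binomial_eq_nat_law mixed_poisson_eq_nat_law
    using lim by (intro weak_conv_nat_law) simp
qed

section \<open>One-sided stable laws live on the nonnegative reals\<close>

definition stable_char_ext :: "real \<Rightarrow> complex \<Rightarrow> complex" where
  "stable_char_ext \<alpha> z = exp (- ((- \<i> * z) powr complex_of_real \<alpha>))"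

lemma stable_char_ext_of_real: "stable_char_ext \<alpha> (complex_of_real t) = stable_char \<alpha> t"
proof -
  consider "t = 0" | "t > 0" | "t < 0" by linarith
  then show ?thesis
  proof cases
    case 1
    then show ?thesis by (simp add: stable_char_ext_def stable_char_def)
  next
    case 2
    have "(- \<i> * complex_of_real t) powr complex_of_real \<alpha> =
        complex_of_real t powr complex_of_real \<alpha> * (- \<i>) powr complex_of_real \<alpha>"
      using 2 by (subst mult.commute, intro powr_times_real_left) auto
    also have "(- \<i>) powr complex_of_real \<alpha> = exp (- (\<i> * complex_of_real (pi * \<alpha> / 2)))"
      by (simp add: powr_def Ln_minus_ii field_simps)
    finally show ?thesis
      using 2 by (simp add: stable_char_ext_def stable_char_def powr_of_real)
  next
    case 3
    have "(- \<i> * complex_of_real t) powr complex_of_real \<alpha> =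
        complex_of_real (- t) powr complex_of_real \<alpha> * \<i> powr complex_of_real \<alpha>"
      using 3 by (subst powr_times_real_left[symmetric]) (auto simp: mult.commute)
    also have "complex_of_real (- t) powr complex_of_real \<alpha> = complex_of_real ((- t) powr \<alpha>)"
      using powr_of_real[of "- t" \<alpha>] 3 by simp
    also have "\<i> powr complex_of_real \<alpha> = exp (- (\<i> * complex_of_real (pi * \<alpha> / 2 * sgn t)))"
      using 3 by (simp add: powr_def Ln_ii field_simps)
    finally show ?thesis
      using 3 by (simp add: stable_char_ext_def stable_char_def)
  qed
qed

lemma norm_stable_char_ext_le_1:
  assumes "0 \<le> Im z" "0 \<le> \<alpha>" "\<alpha> \<le> 1"
  shows "norm (stable_char_ext \<alpha> z) \<le> 1"
proof (cases "z = 0")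
  case True
  then show ?thesis by (simp add: stable_char_ext_def)
next
  case False
  define w where "w = - \<i> * z"
  have w: "w \<noteq> 0" "0 \<le> Re w" using False assms(1) by (simp_all add: w_def)
  then have "\<bar>Im (Ln w)\<bar> \<le> pi / 2" using Re_Ln_pos_le by simp
  then have "\<bar>\<alpha> * Im (Ln w)\<bar> \<le> 1 * (pi / 2)"
    unfolding abs_mult using assms by (intro mult_mono) auto
  then have "0 \<le> cos (\<alpha> * Im (Ln w))" by (intro cos_ge_zero) auto
  then have "0 \<le> Re (w powr complex_of_real \<alpha>)"
    using w by (simp add: powr_def Re_exp)
  then show ?thesis unfolding stable_char_ext_def w_def[symmetric] by (simp add: norm_exp_eq_Re)
qed

lemma analytic_on_stable_char_ext: "stable_char_ext \<alpha> analytic_on ({z. 0 \<le> Im z} - {0})"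
proof -
  have "- \<i> * z \<notin> \<real>\<^sub>\<le>\<^sub>0" if "0 \<le> Im z" "z \<noteq> 0" for z
    using that by (auto simp: nonpos_Reals_def complex_eq_iff)
  then show ?thesis
    unfolding stable_char_ext_def by (auto intro!: analytic_intros)
qed

lemma isCont_stable_char_ext_0:
  assumes "0 < \<alpha>"
  shows "isCont (stable_char_ext \<alpha>) 0"
proof -
  have "((\<lambda>z. (- \<i> * z) powr complex_of_real \<alpha>) \<longlongrightarrow> 0) (at 0)"
  proof (rule tendsto_norm_zero_cancel)
    have "((\<lambda>z. norm z powr \<alpha>) \<longlongrightarrow> 0) (at (0::complex))"
      using assms by (intro tendsto_zero_powrI tendsto_norm_zero tendsto_ident_at) auto
    then show "((\<lambda>z. norm ((- \<i> * z) powr complex_of_real \<alpha>)) \<longlongrightarrow> 0) (at 0)"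
      by (simp add: norm_powr_real_powr' norm_mult)
  qed
  then have "(stable_char_ext \<alpha> \<longlongrightarrow> exp (- 0)) (at 0)"
    unfolding stable_char_ext_def by (intro tendsto_intros)
  then show ?thesis by (simp add: isCont_def stable_char_ext_def)
qed

lemma continuous_on_stable_char_ext:
  assumes "0 < \<alpha>"
  shows "continuous_on {z. 0 \<le> Im z} (stable_char_ext \<alpha>)"
proof (intro continuous_at_imp_continuous_on ballI)
  fix z :: complex assume "z \<in> {z. 0 \<le> Im z}"
  then show "isCont (stable_char_ext \<alpha>) z"
    using isCont_stable_char_ext_0[OF assms] analytic_on_stable_char_ext
    by (cases "z = 0") (auto intro!: field_differentiable_imp_continuous_at analytic_on_imp_differentiable_at)
qed

text \<open>The integrand of the Levy inversion formula, extended to an entire function.\<close>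
definition levy_kernel :: "real \<Rightarrow> real \<Rightarrow> complex \<Rightarrow> complex" where
  "levy_kernel a b z = (if z = 0 then complex_of_real (b - a) else
     (exp (\<i> * (- (z * complex_of_real a))) - exp (\<i> * (- (z * complex_of_real b)))) / (\<i> * z))"

lemma levy_kernel_of_real:
  "t \<noteq> 0 \<Longrightarrow> levy_kernel a b (complex_of_real t) = (iexp (- (t * a)) - iexp (- (t * b))) / (\<i> * complex_of_real t)"
  by (simp add: levy_kernel_def)

lemma holomorphic_on_levy_kernel: "levy_kernel a b holomorphic_on (- {0})"
proof -
  have "(\<lambda>z. (exp (\<i> * (- (z * complex_of_real a))) - exp (\<i> * (- (z * complex_of_real b)))) / (\<i> * z))
        holomorphic_on (- {0})"
    by (intro holomorphic_intros) auto
  then show ?thesis by (rule holomorphic_cong[THEN iffD1, rotated 2]) (auto simp: levy_kernel_def)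
qed

lemma isCont_levy_kernel_0: "isCont (levy_kernel a b) 0"
proof -
  define E where "E z = exp (\<i> * (- (z * complex_of_real a))) - exp (\<i> * (- (z * complex_of_real b)))" for z
  have "(E has_field_derivative \<i> * complex_of_real (b - a)) (at 0)"
    unfolding E_def by (auto intro!: derivative_eq_intros simp: algebra_simps)
  then have "((\<lambda>z. (E z - E 0) / (z - 0) / \<i>) \<longlongrightarrow> \<i> * complex_of_real (b - a) / \<i>) (at 0)"
    unfolding has_field_derivative_iff by (intro tendsto_intros) auto
  moreover have "E 0 = 0" by (simp add: E_def)
  then have "(E z - E 0) / (z - 0) / \<i> = E z / (\<i> * z)" for z
    by (simp only: diff_zero divide_divide_eq_left mult.commute)
  ultimately have "((\<lambda>z. E z / (\<i> * z)) \<longlongrightarrow> complex_of_real (b - a)) (at 0)"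
    by simp
  then have "(levy_kernel a b \<longlongrightarrow> complex_of_real (b - a)) (at 0)"
    by (rule tendsto_cong[THEN iffD1, rotated])
       (auto simp: eventually_at_filter levy_kernel_def E_def)
  then show ?thesis by (simp add: isCont_def levy_kernel_def)
qed

lemma isCont_levy_kernel: "isCont (levy_kernel a b) z"
  using isCont_levy_kernel_0 holomorphic_on_levy_kernel
  by (cases "z = 0")
     (auto intro!: field_differentiable_imp_continuous_at holomorphic_on_imp_differentiable_at)

lemma norm_levy_kernel_le:
  assumes "z \<noteq> 0"
  shows "norm (levy_kernel a b z) \<le> (exp (a * Im z) + exp (b * Im z)) / norm z"
proof -
  have "norm (levy_kernel a b z) =
      norm (exp (\<i> * (- (z * complex_of_real a))) - exp (\<i> * (- (z * complex_of_real b)))) / norm z"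
    using assms by (simp add: levy_kernel_def norm_divide norm_mult)
  also have "\<dots> \<le> (norm (exp (\<i> * (- (z * complex_of_real a)))) +
      norm (exp (\<i> * (- (z * complex_of_real b))))) / norm z"
    by (intro divide_right_mono norm_triangle_ineq4) simp
  also have "\<dots> = (exp (a * Im z) + exp (b * Im z)) / norm z"
    by (simp add: norm_exp_eq_Re mult.commute)
  finally show ?thesis .
qed

lemma interior_halfspace_Im_ge: "interior {z. b \<le> Im z} = {z. b < Im z}"
  using interior_halfspace_ge[of \<i> b] by (simp add: inner_complex_def)

lemma contour_integrable_linepath_upper_half_plane:
  assumes "continuous_on {z. 0 \<le> Im z} f" "0 \<le> Im p" "0 \<le> Im q"
  shows "f contour_integrable_on linepath p q"
  using assms
  by (intro contour_integrable_continuous_linepath continuous_on_subset[OF assms(1)]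
      closed_segment_subset convex_halfspace_Im_ge) auto

lemma integral_real_segment_eq_rectangle_sides:
  fixes f :: "complex \<Rightarrow> complex"
  assumes cont: "continuous_on {z. 0 \<le> Im z} f"
    and holo: "\<And>z. 0 < Im z \<Longrightarrow> f field_differentiable at z"
    and T: "0 < T" and Y: "0 \<le> Y"
  shows "integral {-T..T} (\<lambda>t. f (of_real t)) =
    - (contour_integral (linepath (of_real T) (Complex T Y)) f +
       contour_integral (linepath (Complex T Y) (Complex (-T) Y)) f +
       contour_integral (linepath (Complex (-T) Y) (of_real (-T))) f)"
proof -
  let ?H = "{z. 0 \<le> Im z}"
  define g where "g = linepath (of_real (-T)) (of_real T) +++ linepath (of_real T) (Complex T Y) +++
      linepath (Complex T Y) (Complex (-T) Y) +++ linepath (Complex (-T) Y) (of_real (-T))"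
  have ci: "f contour_integrable_on linepath p q" if "0 \<le> Im p" "0 \<le> Im q" for p q
    using cont that by (rule contour_integrable_linepath_upper_half_plane)
  have seg: "closed_segment p q \<subseteq> ?H" if "0 \<le> Im p" "0 \<le> Im q" for p q
    using that by (intro closed_segment_subset convex_halfspace_Im_ge) auto
  have "(f has_contour_integral 0) g"
  proof (rule Cauchy_theorem_convex[OF cont convex_halfspace_Im_ge, of "{}"])
    show "f field_differentiable at z" if "z \<in> interior ?H - {}" for z
      using that holo by (simp add: interior_halfspace_Im_ge)
    show "valid_path g" unfolding g_def by (intro valid_path_join valid_path_linepath) auto
    show "path_image g \<subseteq> ?H" unfolding g_def using Y by (simp add: path_image_join seg)
    show "pathfinish g = pathstart g" by (simp add: g_def)
  qed auto
  moreover have "(f has_contour_integral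
      (contour_integral (linepath (of_real (-T)) (of_real T)) f +
       (contour_integral (linepath (of_real T) (Complex T Y)) f +
        (contour_integral (linepath (Complex T Y) (Complex (-T) Y)) f +
         contour_integral (linepath (Complex (-T) Y) (of_real (-T))) f)))) g"
    unfolding g_def using Y
    by (intro has_contour_integral_join has_contour_integral_integral ci valid_path_join valid_path_linepath) auto
  moreover have "contour_integral (linepath (of_real (-T)) (of_real T)) f = integral {-T..T} (\<lambda>t. f (of_real t))"
    using T by (subst contour_integral_linepath_Reals_eq) auto
  ultimately show ?thesis
    by (auto dest: has_contour_integral_unique simp: eq_neg_iff_add_eq_0 algebra_simps)
qed

lemma norm_integral_real_segment_le:
  fixes f :: "complex \<Rightarrow> complex"
  assumes cont: "continuous_on {z. 0 \<le> Im z} f"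
    and holo: "\<And>z. 0 < Im z \<Longrightarrow> f field_differentiable at z"
    and T: "0 < T" and Y: "0 \<le> Y"
    and side: "\<And>z. \<bar>Re z\<bar> = T \<Longrightarrow> 0 \<le> Im z \<Longrightarrow> Im z \<le> Y \<Longrightarrow> norm (f z) \<le> A"
    and top: "\<And>z. Im z = Y \<Longrightarrow> \<bar>Re z\<bar> \<le> T \<Longrightarrow> norm (f z) \<le> B"
  shows "norm (integral {-T..T} (\<lambda>t. f (of_real t))) \<le> 2 * Y * A + 2 * T * B"
proof -
  have A: "0 \<le> A" using side[of "of_real T"] T Y by (auto intro: order_trans[OF norm_ge_zero])
  have B: "0 \<le> B" using top[of "Complex 0 Y"] T by (auto intro: order_trans[OF norm_ge_zero])
  have ci: "f contour_integrable_on linepath p q" if "0 \<le> Im p" "0 \<le> Im q" for p q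
    using cont that by (rule contour_integrable_linepath_upper_half_plane)
  let ?R = "contour_integral (linepath (of_real T) (Complex T Y)) f"
  let ?U = "contour_integral (linepath (Complex T Y) (Complex (-T) Y)) f"
  let ?L = "contour_integral (linepath (Complex (-T) Y) (of_real (-T))) f"
  have right: "norm ?R \<le> A * Y"
    using Y T
    by (intro order_trans[OF contour_integral_bound_linepath[OF ci A]])
       (auto simp: closed_segment_same_Re closed_segment_eq_real_ivl complex_of_real_def
         complex_diff complex_norm split: if_splits intro!: side)
  have left: "norm ?L \<le> A * Y"
    using Y T
    by (intro order_trans[OF contour_integral_bound_linepath[OF ci A]])
       (auto simp: closed_segment_same_Re closed_segment_eq_real_ivl complex_of_real_def
         complex_diff complex_norm split: if_splits intro!: side)
  have "sqrt (4 * T\<^sup>2) = 2 * T"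
    using T by (simp add: real_sqrt_mult)
  then have upper: "norm ?U \<le> B * (2 * T)"
    using Y T
    by (intro order_trans[OF contour_integral_bound_linepath[OF ci B]])
       (auto simp: closed_segment_same_Im closed_segment_eq_real_ivl complex_diff complex_norm
         split: if_splits intro!: top)
  have "norm (integral {-T..T} (\<lambda>t. f (of_real t))) = norm (?R + ?U + ?L)"
    using integral_real_segment_eq_rectangle_sides[OF cont holo T Y] by (metis norm_minus_cancel)
  then show ?thesis
    using norm_triangle_ineq[of "?R + ?U" ?L] norm_triangle_ineq[of ?R ?U] right left upper
    by (simp add: algebra_simps)
qed

lemma continuous_on_levy_kernel_stable_char_ext:
  assumes "0 < \<alpha>"
  shows "continuous_on {z. 0 \<le> Im z} (\<lambda>z. levy_kernel a b z * stable_char_ext \<alpha> z)"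
  using assms
  by (intro continuous_on_mult continuous_on_stable_char_ext continuous_at_imp_continuous_on ballI
      isCont_levy_kernel)

lemma norm_integral_levy_kernel_stable_le:
  fixes T :: real
  assumes T: "0 < T" and Y: "0 < Y" and ab: "a < b" "b < 0" and \<alpha>: "0 < \<alpha>" "\<alpha> \<le> 1"
  shows "norm (integral {-T..T} (\<lambda>t::real. levy_kernel a b t * stable_char_ext \<alpha> t))
    \<le> 4 * Y / T + 4 * T * exp (b * Y) / Y"
proof -
  let ?f = "\<lambda>z. levy_kernel a b z * stable_char_ext \<alpha> z"
  have bound: "norm (?f z) \<le> (exp (a * Im z) + exp (b * Im z)) / norm z" if "z \<noteq> 0" "0 \<le> Im z" for z
    using mult_mono[OF norm_levy_kernel_le norm_stable_char_ext_le_1] that \<alpha>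
    by (simp add: norm_mult add_nonneg_nonneg)
  have "norm (integral {-T..T} (\<lambda>t. ?f (of_real t))) \<le> 2 * Y * (2 / T) + 2 * T * (2 * exp (b * Y) / Y)"
  proof (rule norm_integral_real_segment_le)
    show "continuous_on {z. 0 \<le> Im z} ?f"
      using \<alpha>(1) by (rule continuous_on_levy_kernel_stable_char_ext)
    show "?f field_differentiable at z" if "0 < Im z" for z
      using that
      by (intro field_differentiable_mult analytic_on_imp_differentiable_at[OF analytic_on_stable_char_ext]
          holomorphic_on_imp_differentiable_at[OF holomorphic_on_levy_kernel]) auto
    show "norm (?f z) \<le> 2 / T" if "\<bar>Re z\<bar> = T" "0 \<le> Im z" "Im z \<le> Y" for z
    proof -
      have "exp (a * Im z) \<le> 1" "exp (b * Im z) \<le> 1"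
        using ab that by (auto simp: mult_nonpos_nonneg)
      then have "exp (a * Im z) + exp (b * Im z) \<le> 2" by linarith
      moreover have "T \<le> norm z" using abs_Re_le_cmod[of z] that by simp
      ultimately have "(exp (a * Im z) + exp (b * Im z)) / norm z \<le> 2 / T"
        using T by (intro frac_le) simp_all
      with bound[of z] that T show ?thesis by fastforce
    qed
    show "norm (?f z) \<le> 2 * exp (b * Y) / Y" if "Im z = Y" "\<bar>Re z\<bar> \<le> T" for z
    proof -
      have "exp (a * Y) \<le> exp (b * Y)" using ab Y by (auto intro: mult_right_mono)
      then have "exp (a * Im z) + exp (b * Im z) \<le> 2 * exp (b * Y)" using that by simp
      moreover have "Y \<le> norm z" using abs_Im_le_cmod[of z] that by simp
      ultimately have "(exp (a * Im z) + exp (b * Im z)) / norm z \<le> 2 * exp (b * Y) / Y"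
        using Y by (intro frac_le) simp_all
      with bound[of z] that Y show ?thesis by fastforce
    qed
  qed (use T Y in auto)
  then show ?thesis using T Y by (simp add: field_simps)
qed

lemma levy_inversion_integral_stable_eq:
  fixes T :: real
  assumes S_char: "\<And>t. char S t = stable_char \<alpha> t" and \<alpha>: "0 < \<alpha>" and T: "0 < T"
  shows "(CLBINT t=-T..T. (iexp (- (t * a)) - iexp (- (t * b))) / (\<i> * t) * char S t)
    = integral {-T..T} (\<lambda>t::real. levy_kernel a b t * stable_char_ext \<alpha> t)"
proof -
  have "continuous_on {-T..T} (\<lambda>t::real. levy_kernel a b t * stable_char_ext \<alpha> t)"
    by (rule continuous_on_compose2[OF continuous_on_levy_kernel_stable_char_ext[OF \<alpha>]
        continuous_on_of_real]) auto
  then have int: "set_integrable lborel {-T..T} (\<lambda>t::real. levy_kernel a b t * stable_char_ext \<alpha> t)"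
    by (rule borel_integrable_atLeastAtMost')
  have "(CLBINT t=-T..T. (iexp (- (t * a)) - iexp (- (t * b))) / (\<i> * t) * char S t)
      = (LINT t|lborel. indicator {x. - T < x \<and> x < T} t *\<^sub>R
          ((iexp (- (t * a)) - iexp (- (t * b))) / (\<i> * t) * char S t))"
    using T by (simp add: interval_lebesgue_integral_def set_lebesgue_integral_def einterval_def)
  also have "\<dots> = (LINT t|lborel. indicator {-T..T} t *\<^sub>R (levy_kernel a b t * stable_char_ext \<alpha> t))"
    by (rule integral_discrete_difference[where X="{0, -T, T}"])
       (auto simp: indicator_def levy_kernel_of_real stable_char_ext_of_real S_char)
  also have "\<dots> = integral {-T..T} (\<lambda>t::real. levy_kernel a b t * stable_char_ext \<alpha> t)"
    using set_borel_integral_eq_integral(2)[OF int] by (simp add: set_lebesgue_integral_def)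
  finally show ?thesis .
qed

lemma measure_Ioc_neg_stable_eq_0:
  assumes S: "real_distribution S" and S_char: "\<And>t. char S t = stable_char \<alpha> t"
    and \<alpha>: "0 < \<alpha>" "\<alpha> \<le> 1" and ab: "a < b" "b < 0"
    and atoms: "measure S {a} = 0" "measure S {b} = 0"
  shows "measure S {a<..b} = 0"
proof -
  interpret S: real_distribution S by fact
  define I where "I T = 1 / (2 * pi) *
    (CLBINT t=-T..T. (iexp (- (t * a)) - iexp (- (t * b))) / (\<i> * t) * char S t)" for T :: real
  have "(\<lambda>n. I (real n)) \<longlonglongrightarrow> measure S {a<..b}"
    using S.Levy_Inversion[of a b] ab atoms by (simp add: I_def)
  moreover have "(\<lambda>n. I (real n)) \<longlonglongrightarrow> 0"
  proof (rule Lim_null_comparison)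
    define bd where "bd n = 4 * sqrt (real n) / real n + 4 * real n * exp (b * sqrt (real n)) / sqrt (real n)"
      for n :: nat
    show "(\<lambda>n. 1 / (2 * pi) * bd n) \<longlonglongrightarrow> 0" unfolding bd_def using ab by real_asymp
    show "\<forall>\<^sub>F n in sequentially. norm (I (real n)) \<le> 1 / (2 * pi) * bd n"
      using eventually_ge_at_top[of "1::nat"]
    proof eventually_elim
      case (elim n)
      then have "norm (integral {- real n..real n} (\<lambda>t::real. levy_kernel a b t * stable_char_ext \<alpha> t)) \<le> bd n"
        unfolding bd_def using norm_integral_levy_kernel_stable_le[of "real n" "sqrt (real n)" a b \<alpha>] ab \<alpha>
        by simp
      then show ?case
        using levy_inversion_integral_stable_eq[OF S_char \<alpha>(1), of "real n" a b] elim
        by (simp add: I_def norm_mult norm_divide divide_right_mono)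
    qed
  qed
  ultimately show ?thesis using LIMSEQ_unique by fastforce
qed

lemma exists_non_atom:
  assumes "finite_measure M" "c < (d::real)"
  obtains x where "c < x" "x < d" "measure M {x} = 0"
proof -
  have "\<not> {c<..<d} \<subseteq> {x. measure M {x} \<noteq> 0}"
    using countable_subset[OF _ finite_measure.countable_support[OF assms(1)]]
      uncountable_open_interval[of c d] assms(2) by auto
  then show ?thesis using that by auto
qed

lemma cdf_neg_stable_eq_0:
  assumes S: "real_distribution S" and S_char: "\<And>t. char S t = stable_char \<alpha> t"
    and \<alpha>: "0 < \<alpha>" "\<alpha> \<le> 1" and b: "b < 0"
  shows "cdf S b = 0"
proof -
  interpret S: real_distribution S by fact
  obtain c where c: "b < c" "c < 0" "measure S {c} = 0"
    using exists_non_atom[OF S.finite_measure_axioms b] .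
  have "\<exists>a. a < min c (- real k) \<and> measure S {a} = 0" for k :: nat
  proof -
    obtain a where "min c (- real k) - 1 < a" "a < min c (- real k)" "measure S {a} = 0"
      by (rule exists_non_atom[OF S.finite_measure_axioms, of "min c (- real k) - 1" "min c (- real k)"])
         (auto intro: that)
    then show ?thesis by blast
  qed
  then obtain a where a: "\<And>k. a k < min c (- real k)" "\<And>k. measure S {a k} = 0"
    by metis
  have "cdf S c = cdf S (a k)" for k
  proof -
    have "a k < c" using a(1)[of k] by simp
    then have "cdf S c - cdf S (a k) = measure S {a k<..c}" by (rule S.cdf_diff_eq)
    also have "\<dots> = 0"
      using measure_Ioc_neg_stable_eq_0[OF S S_char \<alpha> \<open>a k < c\<close> c(2) a(2) c(3)] .
    finally show ?thesis by simp
  qed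
  moreover have "filterlim a at_bot sequentially"
  proof (rule filterlim_at_bot_mono[OF filterlim_compose[OF filterlim_uminus_at_bot_at_top
          filterlim_real_sequentially]])
    show "\<forall>\<^sub>F k in sequentially. a k \<le> - real k"
      using a(1) by (simp add: less_imp_le)
  qed
  then have "(\<lambda>k. cdf S (a k)) \<longlonglongrightarrow> 0"
    by (rule filterlim_compose[OF S.cdf_lim_at_bot])
  ultimately have "cdf S c = 0" by (simp add: LIMSEQ_const_iff)
  then show ?thesis using S.cdf_nondecreasing[of b c] S.cdf_nonneg[of b] c by linarith
qed

lemma AE_stable_nonneg:
  assumes S: "real_distribution S" and S_char: "\<And>t. char S t = stable_char \<alpha> t"
    and \<alpha>: "0 < \<alpha>" "\<alpha> \<le> 1"
  shows "AE x in S. 0 \<le> x"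
proof -
  interpret S: real_distribution S by fact
  have "AE x in S. - inverse (real (Suc k)) < x" for k
  proof -
    have "measure S {..- inverse (real (Suc k))} = 0"
      using cdf_neg_stable_eq_0[OF S S_char \<alpha>] by (simp add: cdf_def)
    then have "{x \<in> space S. \<not> - inverse (real (Suc k)) < x} \<in> null_sets S"
      by (auto simp: null_sets_def S.emeasure_eq_measure not_less atMost_def)
    then show ?thesis by (simp add: AE_iff_null_sets)
  qed
  then have "AE x in S. \<forall>k. - inverse (real (Suc k)) < x" by (simp add: AE_all_countable)
  then show ?thesis
  proof (rule eventually_mono)
    fix x assume x: "\<forall>k. - inverse (real (Suc k)) < x"
    show "0 \<le> x"
    proof (rule ccontr)
      assume "\<not> 0 \<le> x"
      then have "0 < - x" by simp
      then obtain k where "inverse (real (Suc k)) < - x" using reals_Archimedean by blast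
      with x[rule_format, of k] show False by linarith
    qed
  qed
qed

theorem corollary3:
  fixes r \<alpha> :: real and m :: "nat \<Rightarrow> nat" and S :: "real measure"
    and Y :: "nat \<Rightarrow> real measure"
  assumes r: "0 < r" "r < 1"
    and \<alpha>: "0 < \<alpha>" "\<alpha> < 1"
    and m_mono: "mono m" and m_lim: "filterlim m at_top sequentially"
    and S_dist: "real_distribution S"
    and S_char: "\<And>t. char S t = stable_char \<alpha> t"
    and Y_law: "\<And>n. Y n = distr (SZ_measure S \<alpha> r (real (m n) powr (- \<alpha>))) borel
                              (\<lambda>x. x / (1 + x))"
  shows "weak_conv_m (\<lambda>n. mixed_binomial (m n) (Y n)) (mixed_poisson (SZ_measure S \<alpha> r 1))"
proof -
  interpret S: real_distribution S by fact
  interpret Z: prob_space "Z_measure r 1" using prob_space_Z_measure[OF r] .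
  interpret SZ: pair_prob_space S "Z_measure r 1" ..
  define W where "W = (\<lambda>(s, z). s * z powr (1 / \<alpha>))"
  have "AE x in S \<Otimes>\<^sub>M Z_measure r 1. 0 \<le> W x"
    unfolding W_def using \<alpha>
    by (intro AE_SZ_nonneg[OF S_dist AE_stable_nonneg[OF S_dist S_char] r]) simp_all
  from weak_conv_mixed_binomial_mixed_poisson[OF SZ.prob_space_axioms _ this m_lim]
  have "weak_conv_m (\<lambda>n. mixed_binomial (m n) (distr (S \<Otimes>\<^sub>M Z_measure r 1) borel
      (\<lambda>x. (W x / real (m n)) / (1 + W x / real (m n)))))
    (mixed_poisson (distr (S \<Otimes>\<^sub>M Z_measure r 1) borel W))"
    by (simp add: W_def)
  moreover have "distr (S \<Otimes>\<^sub>M Z_measure r 1) borel W = SZ_measure S \<alpha> r 1"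
    using SZ_measure_power_eq_distr[OF S_dist r \<alpha>(1), of 1] by (simp add: W_def)
  moreover have "distr (S \<Otimes>\<^sub>M Z_measure r 1) borel (\<lambda>x. (W x / real (m n)) / (1 + W x / real (m n)))
      = Y n" for n
    unfolding Y_law SZ_measure_power_eq_distr[OF S_dist r \<alpha>(1)]
    by (subst distr_distr) (auto simp: W_def comp_def split_beta)
  ultimately show ?thesis by simp
qed

end
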